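(* Let $\epsilon\ge0$, let $I,J\subseteq\mathbb{R}$ be closed bounded intervals with $|I|\le|J|$, and let $\mu$ and $\nu$ be the uniform probability measures on $I$ and $J$. Consider binary classification in which the two labels are equally likely, the label associated with $\mu$ has input distribution $\mu$ and the other label has input distribution $\nu$, classifiers are indexed by closed sets $A\subseteq\mathbb{R}$ (output the $\mu$-label on $A$ and the $\nu$-label on $A^c$), with $0$-$1$ loss and adversarial risk $\mathbb{E}_{(x,y)}\big[\sup_{|x'-x|\le\epsilon}(\text{loss at }x')\big]$. Then the optimal robust risk (infimum over closed $A$) equals $\tfrac12\nu(I^{2\epsilon})$, and the classifier with $A=I^{\epsilon}$ is an optimal robust classifier.
   Context: For $S\subseteq\mathbb{R}$ and $\delta\ge0$, $S^\delta=\{x:|x-s|\le\delta\text{ for some }s\in S\}$. *)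

theory Defs
  imports "HOL-Analysis.Analysis"
begin

definition thicken :: "real set \<Rightarrow> real \<Rightarrow> real set" where
  "thicken S \<delta> = {x. \<exists>s\<in>S. \<bar>x - s\<bar> \<le> \<delta>}"

text \<open>0-1 loss of the classifier indexed by A at input x; label True is the
  mu-label (predicted on A), label False is the nu-label (predicted on the complement).\<close>
definition loss01 :: "real set \<Rightarrow> real \<Rightarrow> bool \<Rightarrow> real" where
  "loss01 A x y = (if (x \<in> A) = y then 0 else 1)"

definition adv_risk :: "real \<Rightarrow> real measure \<Rightarrow> real measure \<Rightarrow> real set \<Rightarrow> real" where
  "adv_risk \<epsilon> \<mu> \<nu> A =
     (1/2) * (\<integral>x. (SUP x'\<in>cball x \<epsilon>. loss01 A x' True) \<partial>\<mu>)
   + (1/2) * (\<integral>x. (SUP x'\<in>cball x \<epsilon>. loss01 A x' False) \<partial>\<nu>)"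

end

theory Submission
  imports Defs
begin

text \<open>The worst loss within distance \<open>\<epsilon>\<close> of a point is the indicator of the
  \<open>\<epsilon>\<close>-thickening of the misclassified region, so the robust risk of \<open>A\<close> is
  \<open>(\<mu> U + \<nu> V) / 2\<close> with \<open>U = (-A)\<^sup>\<epsilon>\<close> and \<open>V = A\<^sup>\<epsilon>\<close>.
  For \<open>A = I\<^sup>\<epsilon>\<close> the set \<open>U\<close> misses \<open>I\<close> and \<open>V = I\<^sup>2\<^sup>\<epsilon>\<close>.
  For an arbitrary closed \<open>A\<close>, the robustly \<open>\<mu>\<close>-classified part \<open>F = I - U\<close> of \<open>I\<close>
  satisfies \<open>F\<^sup>2\<^sup>\<epsilon> \<subseteq> V\<close>, and on the line \<open>I\<^sup>2\<^sup>\<epsilon> - F\<^sup>2\<^sup>\<epsilon>\<close> is no longer than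
  \<open>I - F\<close>: only the gaps of \<open>F\<close> and the two end pieces survive, shifted outwards by \<open>2\<epsilon>\<close>.
  As the density of \<open>\<nu>\<close> is at most that of \<open>\<mu>\<close>, this gives
  \<open>\<nu> (I\<^sup>2\<^sup>\<epsilon> - V) \<le> \<mu> U\<close>, hence \<open>\<nu> (I\<^sup>2\<^sup>\<epsilon>) \<le> \<mu> U + \<nu> V\<close>.\<close>

lemma thicken_eq_sums: "thicken S \<epsilon> = (\<Union>x\<in>S. \<Union>y\<in>cball 0 \<epsilon>. {x + y})"
  unfolding thicken_def by (force simp: dist_real_def)

lemma closed_thicken: "closed S \<Longrightarrow> closed (thicken S \<epsilon>)"
  unfolding thicken_eq_sums by (rule closed_compact_sums) simp_all

lemma open_thicken: "open S \<Longrightarrow> open (thicken S \<epsilon>)"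
  unfolding thicken_eq_sums by (rule open_sums) simp

lemma compact_thicken: "compact S \<Longrightarrow> compact (thicken S \<epsilon>)"
  unfolding thicken_eq_sums by (rule compact_sums') simp_all

lemma thicken_mono: "S \<subseteq> T \<Longrightarrow> thicken S \<epsilon> \<subseteq> thicken T \<epsilon>"
  unfolding thicken_def by blast

lemma thicken_Icc:
  assumes "a \<le> b" "0 \<le> \<delta>"
  shows "thicken {a..b} \<delta> = {a-\<delta>..b+\<delta>}"
proof
  show "thicken {a..b} \<delta> \<subseteq> {a-\<delta>..b+\<delta>}"
    unfolding thicken_def by auto
  show "{a-\<delta>..b+\<delta>} \<subseteq> thicken {a..b} \<delta>"
  proof
    fix x assume "x \<in> {a-\<delta>..b+\<delta>}"
    then show "x \<in> thicken {a..b} \<delta>"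
      unfolding thicken_def using assms
      by (intro CollectI bexI[of _ "max a (min b x)"]) (auto simp: abs_if)
  qed
qed

lemma thicken_thicken:
  assumes "0 \<le> \<delta>" "0 \<le> \<delta>'"
  shows "thicken (thicken S \<delta>) \<delta>' = thicken S (\<delta> + \<delta>')"
proof
  show "thicken (thicken S \<delta>) \<delta>' \<subseteq> thicken S (\<delta> + \<delta>')"
    unfolding thicken_def by force
  show "thicken S (\<delta> + \<delta>') \<subseteq> thicken (thicken S \<delta>) \<delta>'"
  proof
    fix x assume "x \<in> thicken S (\<delta> + \<delta>')"
    then obtain s where s: "s \<in> S" "\<bar>x - s\<bar> \<le> \<delta> + \<delta>'"
      unfolding thicken_def by blast
    define y where "y = s + max (-\<delta>) (min \<delta> (x - s))"
    have "\<bar>y - s\<bar> \<le> \<delta>" "\<bar>x - y\<bar> \<le> \<delta>'"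
      using assms s(2) unfolding y_def by auto
    then show "x \<in> thicken (thicken S \<delta>) \<delta>'"
      unfolding thicken_def using s(1) by blast
  qed
qed

lemma thicken_compl_thicken_compl_subset: "thicken (- thicken (- A) \<epsilon>) \<epsilon> \<subseteq> A"
  unfolding thicken_def by (force simp: abs_minus_commute)

lemma SUP_indicator_cball:
  assumes "0 \<le> \<epsilon>"
  shows "(SUP x'\<in>cball x \<epsilon>. indicator S x' :: real) = indicator (thicken S \<epsilon>) x"
proof (cases "x \<in> thicken S \<epsilon>")
  case True
  then obtain s where "s \<in> S" "s \<in> cball x \<epsilon>"
    by (auto simp: thicken_def dist_real_def abs_minus_commute)
  then show ?thesis
    using True by (intro cSup_eq_maximum) (auto intro!: image_eqI[of _ _ s])
next
  case False
  then have "cball x \<epsilon> \<inter> S = {}"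
    by (auto simp: thicken_def dist_real_def abs_minus_commute)
  then show ?thesis
    using False assms
    by (intro cSup_eq_maximum) (auto simp: indicator_def disjoint_iff intro!: image_eqI[of _ _ x])
qed

lemma loss01_True: "loss01 A x True = indicator (- A) x"
  by (simp add: loss01_def)

lemma loss01_False: "loss01 A x False = indicator A x"
  by (simp add: loss01_def)

lemma adv_risk_eq_thicken:
  assumes "0 \<le> \<epsilon>" "space \<mu> = UNIV" "space \<nu> = UNIV"
  shows "adv_risk \<epsilon> \<mu> \<nu> A = (measure \<mu> (thicken (- A) \<epsilon>) + measure \<nu> (thicken A \<epsilon>)) / 2"
  using assms by (simp add: adv_risk_def loss01_True loss01_False SUP_indicator_cball)

lemma measure_uniform_Icc:
  fixes a b :: real
  assumes "a < b" "S \<in> sets borel"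
  shows "measure (uniform_measure lborel {a..b}) S = measure lborel ({a..b} \<inter> S) / (b - a)"
  using assms by simp

lemma measure_uniform_Icc_le_1:
  fixes a b :: real
  assumes "a < b" "S \<in> sets borel"
  shows "measure (uniform_measure lborel {a..b}) S \<le> 1"
proof -
  have "measure lborel ({a..b} \<inter> S) \<le> measure lborel {a..b}"
    using assms(2) by (intro measure_mono_fmeasurable fmeasurable_compact) auto
  then show ?thesis
    using assms by (simp add: measure_uniform_Icc)
qed

lemma measure_uniform_Icc_le:
  fixes a b c d :: real
  assumes "a < b" "b - a \<le> d - c" "S \<in> fmeasurable lborel"
  shows "measure (uniform_measure lborel {c..d}) S \<le> measure lborel S / (b - a)"
proof -
  have "measure (uniform_measure lborel {c..d}) S = measure lborel ({c..d} \<inter> S) / (d - c)"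
    using assms by (intro measure_uniform_Icc) auto
  also have "\<dots> \<le> measure lborel S / (d - c)"
    using assms by (intro divide_right_mono measure_mono_fmeasurable) auto
  also have "\<dots> \<le> measure lborel S / (b - a)"
    using assms by (intro divide_left_mono) auto
  finally show ?thesis .
qed

lemma finite_measure_uniform_Icc:
  fixes a b :: real
  assumes "a < b"
  shows "finite_measure (uniform_measure lborel {a..b})"
  using assms by (intro finite_measureI) simp

lemma measure_thicken_Icc_diff_thicken_le:
  fixes F :: "real set"
  assumes "compact F" "F \<noteq> {}" "F \<subseteq> {a..b}" "0 \<le> \<delta>"
  shows "measure lborel (thicken {a..b} \<delta> - thicken F \<delta>) \<le> measure lborel ({a..b} - F)"
proof -
  define f1 f2 where "f1 = Inf F" and "f2 = Sup F"
  have F_closed: "closed F" and F_bdd: "bdd_below F" "bdd_above F"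
    using assms(1) by (auto intro: compact_imp_closed bounded_imp_bdd_below bounded_imp_bdd_above
        compact_imp_bounded)
  have f12: "f1 \<in> F" "f2 \<in> F"
    unfolding f1_def f2_def using assms(2) F_bdd F_closed
    by (auto intro: closed_contains_Inf closed_contains_Sup)
  have F_sub: "F \<subseteq> {f1..f2}"
    unfolding f1_def f2_def using F_bdd by (auto intro: cInf_lower cSup_upper)
  have order: "a \<le> f1" "f1 \<le> f2" "f2 \<le> b"
    using f12 F_sub assms(3) by auto
  have F_meas: "F \<in> sets lborel"
    using F_closed by simp
  have cover: "thicken {a..b} \<delta> - thicken F \<delta> \<subseteq> {a-\<delta>..<f1-\<delta>} \<union> {f2+\<delta><..b+\<delta>} \<union> ({f1..f2} - F)"
  proof
    fix x assume x: "x \<in> thicken {a..b} \<delta> - thicken F \<delta>"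
    then have "x \<in> {a-\<delta>..b+\<delta>}"
      using thicken_Icc[of a b \<delta>] order assms(4) by auto
    moreover have "x \<notin> F" "\<not> \<bar>x - f1\<bar> \<le> \<delta>" "\<not> \<bar>x - f2\<bar> \<le> \<delta>"
      using x f12 assms(4) unfolding thicken_def by auto
    ultimately show "x \<in> {a-\<delta>..<f1-\<delta>} \<union> {f2+\<delta><..b+\<delta>} \<union> ({f1..f2} - F)"
      by auto
  qed
  have "measure lborel (thicken {a..b} \<delta> - thicken F \<delta>)
      \<le> measure lborel ({a-\<delta>..<f1-\<delta>} \<union> {f2+\<delta><..b+\<delta>} \<union> ({f1..f2} - F))"
  proof (rule measure_mono_fmeasurable[OF cover])
    show "thicken {a..b} \<delta> - thicken F \<delta> \<in> sets lborel"
      using closed_thicken F_closed by auto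
    have "{a-\<delta>..<f1-\<delta>} \<union> {f2+\<delta><..b+\<delta>} \<union> ({f1..f2} - F) \<subseteq> cbox (a-\<delta>) (b+\<delta>)"
      using order assms(4) by auto
    then show "{a-\<delta>..<f1-\<delta>} \<union> {f2+\<delta><..b+\<delta>} \<union> ({f1..f2} - F) \<in> fmeasurable lborel"
      using F_meas by (intro fmeasurableI2[OF fmeasurable_cbox]) auto
  qed
  also have "\<dots> \<le> measure lborel {a-\<delta>..<f1-\<delta>} + measure lborel {f2+\<delta><..b+\<delta>}
      + measure lborel ({f1..f2} - F)"
    using F_meas by (intro order_trans[OF measure_Un_le] add_right_mono measure_Un_le) auto
  also have "\<dots> = (f1 - a) + (b - f2) + measure lborel ({f1..f2} - F)"
    using order assms(4) by simp
  also have "\<dots> = measure lborel ({a..b} - F)"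
    using order F_sub assms(3) F_meas by (simp add: measure_Diff)
  finally show ?thesis .
qed

lemma measure_uniform_thicken_Icc_diff_le:
  fixes a b c d \<epsilon> :: real
  assumes "0 \<le> \<epsilon>" "closed A" "a < b" "c < d" "b - a \<le> d - c"
  shows "measure (uniform_measure lborel {c..d}) (thicken {a..b} (2*\<epsilon>) - thicken A \<epsilon>)
       \<le> measure (uniform_measure lborel {a..b}) (thicken (- A) \<epsilon>)"
proof -
  have U_open: "open (thicken (- A) \<epsilon>)"
    using assms(2) by (intro open_thicken) auto
  have K_compact: "compact (thicken {a..b} (2*\<epsilon>))"
    by (intro compact_thicken compact_Icc)
  have diff_meas: "thicken {a..b} (2*\<epsilon>) - thicken A \<epsilon> \<in> fmeasurable lborel"
    using K_compact closed_thicken[OF assms(2)]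
    by (intro fmeasurable_Diff fmeasurable_compact) auto
  show ?thesis
  proof (cases "{a..b} \<subseteq> thicken (- A) \<epsilon>")
    case True
    then have "measure (uniform_measure lborel {a..b}) (thicken (- A) \<epsilon>) = 1"
      using U_open assms(3) by (simp add: measure_uniform_Icc Int_absorb2)
    then show ?thesis
      using measure_uniform_Icc_le_1[OF assms(4)] fmeasurableD[OF diff_meas]
      by (simp only: sets_lborel)
  next
    case False
    define F where "F = {a..b} - thicken (- A) \<epsilon>"
    have F: "compact F" "F \<noteq> {}" "F \<subseteq> {a..b}"
      using False U_open unfolding F_def by (auto intro: compact_diff)
    have "thicken F (2*\<epsilon>) = thicken (thicken F \<epsilon>) \<epsilon>"
      using assms(1) by (simp add: thicken_thicken)
    also have "\<dots> \<subseteq> thicken A \<epsilon>"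
    proof (rule thicken_mono)
      have "thicken F \<epsilon> \<subseteq> thicken (- thicken (- A) \<epsilon>) \<epsilon>"
        unfolding F_def by (rule thicken_mono) blast
      then show "thicken F \<epsilon> \<subseteq> A"
        using thicken_compl_thicken_compl_subset by blast
    qed
    finally have F_thicken: "thicken F (2*\<epsilon>) \<subseteq> thicken A \<epsilon>" .
    have "measure (uniform_measure lborel {c..d}) (thicken {a..b} (2*\<epsilon>) - thicken A \<epsilon>)
        \<le> measure lborel (thicken {a..b} (2*\<epsilon>) - thicken A \<epsilon>) / (b - a)"
      using assms diff_meas by (intro measure_uniform_Icc_le) auto
    also have "\<dots> \<le> measure lborel (thicken {a..b} (2*\<epsilon>) - thicken F (2*\<epsilon>)) / (b - a)"
    proof (intro divide_right_mono measure_mono_fmeasurable)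
      show "thicken {a..b} (2*\<epsilon>) - thicken F (2*\<epsilon>) \<in> fmeasurable lborel"
        using K_compact compact_thicken[OF F(1)]
        by (intro fmeasurable_Diff fmeasurable_compact) (auto intro: borel_compact)
    qed (use F_thicken diff_meas assms(3) in auto)
    also have "\<dots> \<le> measure lborel ({a..b} - F) / (b - a)"
      using assms F by (intro divide_right_mono measure_thicken_Icc_diff_thicken_le) auto
    also have "\<dots> = measure (uniform_measure lborel {a..b}) (thicken (- A) \<epsilon>)"
      using assms(3) U_open by (simp add: measure_uniform_Icc F_def Diff_Diff_Int)
    finally show ?thesis .
  qed
qed

lemma adv_risk_uniform_Icc_ge:
  fixes a b c d \<epsilon> :: real
  assumes "0 \<le> \<epsilon>" "closed A" "a < b" "c < d" "b - a \<le> d - c"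
  defines "\<mu> \<equiv> uniform_measure lborel {a..b}"
      and "\<nu> \<equiv> uniform_measure lborel {c..d}"
  shows "measure \<nu> (thicken {a..b} (2*\<epsilon>)) / 2 \<le> adv_risk \<epsilon> \<mu> \<nu> A"
proof -
  have sets: "thicken {a..b} (2*\<epsilon>) \<in> sets \<nu>" "thicken A \<epsilon> \<in> sets \<nu>"
    using assms(2) by (auto simp: \<nu>_def intro!: borel_closed closed_thicken)
  have "measure \<nu> (thicken {a..b} (2*\<epsilon>))
      \<le> measure \<nu> (thicken A \<epsilon> \<union> (thicken {a..b} (2*\<epsilon>) - thicken A \<epsilon>))"
    using sets finite_measure_uniform_Icc[OF assms(4)] unfolding \<nu>_def
    by (intro finite_measure.finite_measure_mono) auto
  also have "\<dots> \<le> measure \<nu> (thicken A \<epsilon>) + measure \<nu> (thicken {a..b} (2*\<epsilon>) - thicken A \<epsilon>)"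
    using sets by (intro measure_Un_le) auto
  also have "\<dots> \<le> measure \<nu> (thicken A \<epsilon>) + measure \<mu> (thicken (- A) \<epsilon>)"
    using measure_uniform_thicken_Icc_diff_le[OF assms(1-5)] unfolding \<mu>_def \<nu>_def by simp
  also have "\<dots> = 2 * adv_risk \<epsilon> \<mu> \<nu> A"
    using assms(1) by (simp add: adv_risk_eq_thicken \<mu>_def \<nu>_def)
  finally show ?thesis by simp
qed

theorem theorem9:
  fixes \<epsilon> a b c d :: real
  assumes "\<epsilon> \<ge> 0" and "a < b" and "c < d" and "b - a \<le> d - c"
  defines "\<mu> \<equiv> uniform_measure lborel {a..b}"
      and "\<nu> \<equiv> uniform_measure lborel {c..d}"
  shows "(INF A\<in>{A. closed A}. adv_risk \<epsilon> \<mu> \<nu> A) = (1/2) * measure \<nu> (thicken {a..b} (2*\<epsilon>)) \<and>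
         closed (thicken {a..b} \<epsilon>) \<and>
         adv_risk \<epsilon> \<mu> \<nu> (thicken {a..b} \<epsilon>) = (INF A\<in>{A. closed A}. adv_risk \<epsilon> \<mu> \<nu> A)"
proof -
  define A0 where "A0 = thicken {a..b} \<epsilon>"
  have A0_closed: "closed A0"
    unfolding A0_def by (intro closed_thicken closed_atLeastAtMost)
  have "{a..b} \<inter> thicken (- A0) \<epsilon> = {}"
    using thicken_compl_thicken_compl_subset[of "- {a..b}" \<epsilon>] unfolding A0_def by auto
  then have "measure \<mu> (thicken (- A0) \<epsilon>) = 0"
    using assms(2) A0_closed unfolding \<mu>_def
    by (subst measure_uniform_Icc) (auto intro!: borel_open open_thicken)
  then have risk_A0: "adv_risk \<epsilon> \<mu> \<nu> A0 = measure \<nu> (thicken {a..b} (2*\<epsilon>)) / 2"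
    using assms(1) unfolding A0_def
    by (simp add: adv_risk_eq_thicken thicken_thicken \<mu>_def \<nu>_def flip: mult_2)
  have "adv_risk \<epsilon> \<mu> \<nu> A0 \<le> adv_risk \<epsilon> \<mu> \<nu> A" if "closed A" for A
    using risk_A0 adv_risk_uniform_Icc_ge[OF assms(1) that assms(2-4)] unfolding \<mu>_def \<nu>_def
    by simp
  then have "(INF A\<in>{A. closed A}. adv_risk \<epsilon> \<mu> \<nu> A) = adv_risk \<epsilon> \<mu> \<nu> A0"
    using A0_closed by (intro cInf_eq_minimum) auto
  then show ?thesis
    using risk_A0 A0_closed unfolding A0_def by simp
qed

end
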